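(* Under the standing assumptions below (Assumptions 1 and 2), let $(Q_*,\mu_* )\in\mathcal C\times\mathcal P(\mathsf X)$ be a fixed point of the MFE operator $H$ (i.e. the limit of the value iteration $(Q_{n+1},\mu_{n+1})=H(Q_n,\mu_n)$). For each $x$, $a\mapsto Q_*(x,a)$ has a unique minimizer $f^*(x)=\arg\min_{a'\in\mathsf A}Q_*(x,a')$; define the policy $\pi_*(\cdot|x)=\delta_{f^*(x)}$. Then $(\pi_*,\mu_* )$ is a mean-field equilibrium for the discounted cost criterion.
   Context: Setting. $\mathsf{X}$ is a Polish space with metric $d_{\mathsf X}$; $\mathsf{A}\subset\mathbb{R}^d$ is compact, with Euclidean norm $\|\cdot\|$. $\mathcal{P}(\mathsf X)$ is the set of Borel probability measures on $\mathsf X$. $p:\mathsf X\times\mathsf A\times\mathcal P(\mathsf X)\to\mathcal P(\mathsf X)$ is a measurable transition kernel and $c:\mathsf X\times\mathsf A\times\mathcal P(\mathsf X)\to[0,\infty)$ a measurable one-stage cost. $\beta\in(0,1)$ is a discount factor. Mean-field equilibrium. A policy is a measurable stochastic kernel $\pi:\mathsf X\to\mathcal P(\mathsf A)$; $\Pi$ is the set of policies. For a fixed state-measure $\mu$ and initial distribution $\mu_0$, the state-action process evolves as $x(0)\sim\mu_0$, $a(t)\sim\pi(\cdot|x(t))$, $x(t+1)\sim p(\cdot|x(t),a(t),\mu)$, and $J_\mu(\pi)=E^\pi[\sum_{t\ge0}\beta^tc(x(t),a(t),\mu)]$. $\Psi(\mu)$ is the set of $\pi\in\Pi$ minimizing $J_\mu$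 over $\Pi$ when $\mu_0=\mu$. $\Lambda(\pi)$ is the set of $\nu\in\mathcal P(\mathsf X)$ with $\nu(\cdot)=\int_{\mathsf X\times\mathsf A}p(\cdot|x,a,\nu)\pi(da|x)\nu(dx)$. A pair $(\pi_*,\mu_* )$ is a mean-field equilibrium if $\pi_*\in\Psi(\mu_* )$ and $\mu_*\in\Lambda(\pi_* )$. Notation. $w:\mathsf X\times\mathsf A\to[1,\infty)$ continuous weight. $u_{\min}(x)=\inf_a u(x,a)$, $u_{\max}(x)=\sup_a u(x,a)$. $\|v\|_w=\sup_{x,a}|v(x,a)|/w(x,a)$; $\|u\|_{w_{\max}}=\sup_x|u(x)|/w_{\max}(x)$. $B(\mathsf X,K)$: measurable $u$ with $\|u\|_{w_{\max}}\le K$. $\|g\|_{\mathrm{Lip}}$ the Lipschitz constant; $\mathrm{Lip}(\mathsf X,K)$ continuous $g$ with $\|g\|_{\mathrm{Lip}}\le K$. $W_1$ the Wasserstein distance of order 1. Assumption 1 (with $\xi=\beta$). (a) $c$ continuous, $\|c(\cdot,\cdot,\mu)-c(\cdot,\cdot,\hat\mu)\|_w\le L_1W_1(\mu,\hat\mu)$, $\sup_{(a,\mu)}|c(x,a,\mu)-c(\hat x,a,\mu)|\le L_2d_{\mathsf X}(x,\hat x)$. (b) $p$ weakly continuous; $\sup_xW_1(p(\cdot|x,a,\mu),p(\cdot|x,\hat a,\hat\mu))\le K_1(\|a-\hat a\|+W_1(\mu,\hat\mu))$; $\sup_\mu W_1(p(\cdot|x,a,\mu),p(\cdot|\hat x,\hat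 a,\mu))\le K_2(d_{\mathsf X}(x,\hat x)+\|a-\hat a\|)$. (c) $\mathsf A$ convex. (d) $c\le Mw$ and $\int w_{\max}(y)p(dy|x,a,\mu)\le\alpha w(x,a)$, $M,\alpha\ge0$. (e) With $F(x,v,\mu,a)=c(x,a,\mu)+\beta\int v\,dp(\cdot|x,a,\mu)$ and $\mathcal F$ the nonnegative functions in $\mathrm{Lip}(\mathsf X,\frac{L_2}{1-\beta K_2})\cap B(\mathsf X,\frac{M}{1-\beta\alpha})$: for $v\in\mathcal F$, $a\mapsto F(x,v,\mu,a)$ is differentiable and $\rho$-strongly convex ($\rho>0$), and $\sup_a\|\nabla F(x,v,\mu,a)-\nabla F(\hat x,\hat v,\hat\mu,a)\|\le K_F(d_{\mathsf X}(x,\hat x)+\|v-\hat v\|_{w_{\max}}+W_1(\mu,\hat\mu))$ for $v,\hat v\in\mathcal F$. Assumption 2: $k=\max\{\beta\alpha+\frac{K_F}{\rho}K_1,\ L_1+\beta\frac{L_2}{1-\beta K_2}K_1+(\frac{K_F}{\rho}+1)K_1+K_2+\frac{K_F}{\rho}\}<1$. Objects. $\mathcal C=\{Q:\mathsf X\times\mathsf A\to[0,\infty)$ measurable $:\|Q\|_w\le\frac{M}{1-\beta\alpha},\ \|Q_{\min}\|_{\mathrm{Lip}}\le\frac{L_2}{1-\beta K_2}\}$. $f(x,Q,\mu)$ is the unique minimizer over $a$ of $F(x,Q_{\min},\mu,a)$. $H(Q,\mu)=(H_1,H_2)$ with $H_1(Q,\mu)(x,a)=c(x,a,\mu)+\beta\int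 Q_{\min}(y)p(dy|x,a,\mu)$ and $H_2(Q,\mu)(\cdot)=\int p(\cdot|x,f(x,Q,\mu),\mu)\mu(dx)$. *)

theory Defs
  imports "HOL-Probability.Probability"
begin

definition Prob :: "('x::metric_space) measure set" where
  "Prob = {\<mu>. prob_space \<mu> \<and> sets \<mu> = sets borel}"

definition weak_conv :: "(nat \<Rightarrow> ('x::metric_space) measure) \<Rightarrow> 'x measure \<Rightarrow> bool" where
  "weak_conv \<mu>s \<mu> \<longleftrightarrow>
     (\<forall>g :: 'x \<Rightarrow> real. continuous_on UNIV g \<and> bounded (range g) \<longrightarrow>
        (\<lambda>n. integral\<^sup>L (\<mu>s n) g) \<longlonglongrightarrow> integral\<^sup>L \<mu> g)"

definition couplings :: "('x::metric_space) measure \<Rightarrow> 'x measure \<Rightarrow> ('x \<times> 'x) measure set" where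
  "couplings \<mu> \<nu> = {\<gamma>. prob_space \<gamma> \<and> sets \<gamma> = sets (borel \<Otimes>\<^sub>M borel) \<and>
                         distr \<gamma> borel fst = \<mu> \<and> distr \<gamma> borel snd = \<nu>}"

definition W1 :: "('x::metric_space) measure \<Rightarrow> 'x measure \<Rightarrow> ennreal" where
  "W1 \<mu> \<nu> = (INF \<gamma>\<in>couplings \<mu> \<nu>. \<integral>\<^sup>+ z. ennreal (dist (fst z) (snd z)) \<partial>\<gamma>)"

definition wmax :: "('x \<Rightarrow> 'a \<Rightarrow> real) \<Rightarrow> 'a set \<Rightarrow> 'x \<Rightarrow> real" where
  "wmax w A x = (SUP a\<in>A. w x a)"

definition wmax_norm :: "('x \<Rightarrow> 'a \<Rightarrow> real) \<Rightarrow> 'a set \<Rightarrow> ('x \<Rightarrow> real) \<Rightarrow> real" where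
  "wmax_norm w A u = (SUP x. \<bar>u x\<bar> / wmax w A x)"

definition Lip :: "real \<Rightarrow> (('x::metric_space) \<Rightarrow> real) set" where
  "Lip K = {g. continuous_on UNIV g \<and> (\<forall>x y. \<bar>g x - g y\<bar> \<le> K * dist x y)}"

definition Bnd :: "('x \<Rightarrow> 'a \<Rightarrow> real) \<Rightarrow> 'a set \<Rightarrow> real \<Rightarrow> (('x::metric_space) \<Rightarrow> real) set" where
  "Bnd w A K = {u. u \<in> borel_measurable borel \<and> (\<forall>x. \<bar>u x\<bar> \<le> K * wmax w A x)}"

definition strongly_convex_on :: "'a set \<Rightarrow> real \<Rightarrow> (('a::real_normed_vector) \<Rightarrow> real) \<Rightarrow> bool" where
  "strongly_convex_on A \<rho> g \<longleftrightarrow>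
     (\<forall>a\<in>A. \<forall>b\<in>A. \<forall>t::real. 0 \<le> t \<and> t \<le> 1 \<longrightarrow>
        g (t *\<^sub>R a + (1 - t) *\<^sub>R b) \<le> t * g a + (1 - t) * g b - \<rho> / 2 * t * (1 - t) * (norm (a - b))\<^sup>2)"

definition Fop :: "('x \<Rightarrow> 'a \<Rightarrow> 'x measure \<Rightarrow> real) \<Rightarrow> ('x \<Rightarrow> 'a \<Rightarrow> 'x measure \<Rightarrow> 'x measure) \<Rightarrow> real
    \<Rightarrow> 'x \<Rightarrow> ('x \<Rightarrow> real) \<Rightarrow> 'x measure \<Rightarrow> 'a \<Rightarrow> real" where
  "Fop c p \<beta> x v \<mu> a = c x a \<mu> + \<beta> * integral\<^sup>L (p x a \<mu>) v"

definition Qmin :: "'a set \<Rightarrow> ('x \<Rightarrow> 'a \<Rightarrow> real) \<Rightarrow> 'x \<Rightarrow> real" where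
  "Qmin A Q x = (INF a\<in>A. Q x a)"

definition fsel :: "('x \<Rightarrow> 'a \<Rightarrow> 'x measure \<Rightarrow> real) \<Rightarrow> ('x \<Rightarrow> 'a \<Rightarrow> 'x measure \<Rightarrow> 'x measure) \<Rightarrow> real
    \<Rightarrow> 'a set \<Rightarrow> 'x \<Rightarrow> ('x \<Rightarrow> 'a \<Rightarrow> real) \<Rightarrow> 'x measure \<Rightarrow> 'a" where
  "fsel c p \<beta> A x Q \<mu> =
     (THE a. a \<in> A \<and> (\<forall>b\<in>A. Fop c p \<beta> x (Qmin A Q) \<mu> a \<le> Fop c p \<beta> x (Qmin A Q) \<mu> b))"

definition H1 :: "('x \<Rightarrow> 'a \<Rightarrow> 'x measure \<Rightarrow> real) \<Rightarrow> ('x \<Rightarrow> 'a \<Rightarrow> 'x measure \<Rightarrow> 'x measure) \<Rightarrow> real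
    \<Rightarrow> 'a set \<Rightarrow> ('x \<Rightarrow> 'a \<Rightarrow> real) \<Rightarrow> 'x measure \<Rightarrow> 'x \<Rightarrow> 'a \<Rightarrow> real" where
  "H1 c p \<beta> A Q \<mu> x a = c x a \<mu> + \<beta> * integral\<^sup>L (p x a \<mu>) (Qmin A Q)"

definition H2 :: "('x \<Rightarrow> 'a \<Rightarrow> 'x measure \<Rightarrow> real) \<Rightarrow> ('x \<Rightarrow> 'a \<Rightarrow> 'x measure \<Rightarrow> 'x measure) \<Rightarrow> real
    \<Rightarrow> 'a set \<Rightarrow> ('x \<Rightarrow> 'a \<Rightarrow> real) \<Rightarrow> ('x::topological_space) measure \<Rightarrow> 'x measure" where
  "H2 c p \<beta> A Q \<mu> = measure_of UNIV (sets borel)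
      (\<lambda>B. \<integral>\<^sup>+ x. emeasure (p x (fsel c p \<beta> A x Q \<mu>) \<mu>) B \<partial>\<mu>)"

definition Cset :: "('x \<Rightarrow> 'a \<Rightarrow> real) \<Rightarrow> 'a set \<Rightarrow> real \<Rightarrow> real \<Rightarrow> real \<Rightarrow> real \<Rightarrow> real
    \<Rightarrow> (('x::metric_space) \<Rightarrow> ('a::euclidean_space) \<Rightarrow> real) set" where
  "Cset w A M \<beta> \<alpha> L2 K2 =
     {Q. (\<lambda>(x,a). Q x a) \<in> borel_measurable (borel \<Otimes>\<^sub>M restrict_space borel A)
       \<and> (\<forall>x. \<forall>a\<in>A. 0 \<le> Q x a \<and> \<bar>Q x a\<bar> \<le> M / (1 - \<beta> * \<alpha>) * w x a)
       \<and> (\<forall>x y. \<bar>Qmin A Q x - Qmin A Q y\<bar> \<le> L2 / (1 - \<beta> * K2) * dist x y)}"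

text \<open>Policies: measurable stochastic kernels from X to P(A) (probability measures on the
  ambient Euclidean space concentrated on A).\<close>
definition Policies :: "'a set \<Rightarrow> (('x::topological_space) \<Rightarrow> ('a::topological_space) measure) set" where
  "Policies A = {\<pi>. \<pi> \<in> borel \<rightarrow>\<^sub>M prob_algebra borel \<and> (\<forall>x. emeasure (\<pi> x) A = 1)}"

text \<open>Law of the state x(t) when mu is frozen, x(0) ~ mu0, a(t) ~ pi(.|x(t)),
  x(t+1) ~ p(.|x(t),a(t),mu).\<close>
primrec state_law :: "('x \<Rightarrow> 'a \<Rightarrow> 'x measure \<Rightarrow> 'x measure) \<Rightarrow> ('x \<Rightarrow> 'a measure) \<Rightarrow> 'x measure
    \<Rightarrow> ('x::topological_space) measure \<Rightarrow> nat \<Rightarrow> 'x measure" where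
  "state_law p \<pi> \<mu> \<mu>0 0 = \<mu>0"
| "state_law p \<pi> \<mu> \<mu>0 (Suc t) = measure_of UNIV (sets borel)
      (\<lambda>B. \<integral>\<^sup>+ x. \<integral>\<^sup>+ a. emeasure (p x a \<mu>) B \<partial>(\<pi> x) \<partial>(state_law p \<pi> \<mu> \<mu>0 t))"

text \<open>J_mu(pi) = E^pi [ sum_t beta^t c(x(t),a(t),mu) ] (computed through the laws of
  (x(t),a(t)) and monotone convergence; extended-real valued).\<close>
definition Jcost :: "('x \<Rightarrow> 'a \<Rightarrow> 'x measure \<Rightarrow> real) \<Rightarrow> ('x \<Rightarrow> 'a \<Rightarrow> 'x measure \<Rightarrow> 'x measure) \<Rightarrow> real
    \<Rightarrow> ('x \<Rightarrow> 'a measure) \<Rightarrow> 'x measure \<Rightarrow> ('x::topological_space) measure \<Rightarrow> ennreal" where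
  "Jcost c p \<beta> \<pi> \<mu> \<mu>0 =
     (\<Sum>t. ennreal (\<beta> ^ t) * (\<integral>\<^sup>+ x. \<integral>\<^sup>+ a. ennreal (c x a \<mu>) \<partial>(\<pi> x) \<partial>(state_law p \<pi> \<mu> \<mu>0 t)))"

definition Psi :: "('x \<Rightarrow> 'a \<Rightarrow> 'x measure \<Rightarrow> real) \<Rightarrow> ('x \<Rightarrow> 'a \<Rightarrow> 'x measure \<Rightarrow> 'x measure) \<Rightarrow> real
    \<Rightarrow> ('a::topological_space) set \<Rightarrow> ('x::topological_space) measure \<Rightarrow> ('x \<Rightarrow> 'a measure) set" where
  "Psi c p \<beta> A \<mu> = {\<pi> \<in> Policies A. \<forall>\<pi>'\<in>Policies A. Jcost c p \<beta> \<pi> \<mu> \<mu> \<le> Jcost c p \<beta> \<pi>' \<mu> \<mu>}"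

definition Lambda :: "('x \<Rightarrow> 'a \<Rightarrow> 'x measure \<Rightarrow> 'x measure) \<Rightarrow> ('x \<Rightarrow> 'a measure)
    \<Rightarrow> ('x::metric_space) measure set" where
  "Lambda p \<pi> = {\<nu> \<in> Prob. \<forall>B \<in> sets borel.
       emeasure \<nu> B = (\<integral>\<^sup>+ x. \<integral>\<^sup>+ a. emeasure (p x a \<nu>) B \<partial>(\<pi> x) \<partial>\<nu>)}"

definition is_MFE :: "('x \<Rightarrow> 'a \<Rightarrow> 'x measure \<Rightarrow> real) \<Rightarrow> ('x \<Rightarrow> 'a \<Rightarrow> 'x measure \<Rightarrow> 'x measure) \<Rightarrow> real
    \<Rightarrow> ('a::topological_space) set \<Rightarrow> ('x \<Rightarrow> 'a measure) \<Rightarrow> ('x::metric_space) measure \<Rightarrow> bool" where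
  "is_MFE c p \<beta> A \<pi> \<mu> \<longleftrightarrow> \<pi> \<in> Psi c p \<beta> A \<mu> \<and> \<mu> \<in> Lambda p \<pi>"

end

theory Submission
  imports Defs
begin

text \<open>At a fixed point of \<open>H\<close>, \<open>Qs x\<close> agrees on \<open>A\<close> with the strongly convex function
  \<open>F(x, Qmin A Qs, \<mu>s, \<cdot>)\<close>, so it has a unique minimiser \<open>f x\<close>; comparing the first-order
  conditions at two states shows that \<open>f\<close> is \<open>KF/\<rho>\<close>-Lipschitz, so \<open>\<delta>\<^sub>f\<close> is a policy. The second
  fixed-point equation says exactly that \<open>\<mu>s\<close> is invariant under \<open>\<delta>\<^sub>f\<close>.
  For optimality, freeze \<open>\<mu>s\<close>: \<open>V = Qmin A Qs\<close> satisfies \<open>V x \<le> c(x,a) + \<beta> \<integral>V dp(x,a)\<close> for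
  \<open>a \<in> A\<close>, with equality at \<open>a = f x\<close>. Unrolling the equality along \<open>\<delta>\<^sub>f\<close> bounds its cost by
  \<open>\<integral>V d\<mu>s\<close>. For an arbitrary policy the inequality is iterated on the truncations
  \<open>V - (\<beta>\<alpha>)\<^sup>n K wmax\<close>, which the drift condition keeps under control; they increase to \<open>V\<close>,
  so \<open>\<integral>V d\<mu>s\<close> is also a lower bound for the cost.\<close>

lemma segment_difference_quotient_tendsto:
  fixes g :: "'a::euclidean_space \<Rightarrow> real"
  assumes der: "(g has_derivative (\<lambda>h. D \<bullet> h)) (at a within A)"
    and "convex A" and "a \<in> A" and "b \<in> A"
  shows "((\<lambda>t. (g (a + t *\<^sub>R (b - a)) - g a) / t) \<longlongrightarrow> D \<bullet> (b - a)) (at_right 0)"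
proof -
  define \<phi> where "\<phi> = (\<lambda>t::real. a + t *\<^sub>R (b - a))"
  have d\<phi>: "(\<phi> has_derivative (\<lambda>t. t *\<^sub>R (b - a))) (at 0 within {0..1})"
    unfolding \<phi>_def by (auto intro!: derivative_eq_intros)
  have "\<phi> ` {0..1} \<subseteq> A"
  proof
    fix y assume "y \<in> \<phi> ` {0..1}"
    then obtain t where t: "0 \<le> t" "t \<le> 1" and y: "y = (1 - t) *\<^sub>R a + t *\<^sub>R b"
      unfolding \<phi>_def by (auto simp: algebra_simps)
    show "y \<in> A" unfolding y using assms(2-4) t by (intro convexD) auto
  qed
  then have "(g has_derivative (\<lambda>h. D \<bullet> h)) (at (\<phi> 0) within \<phi> ` {0..1})"
    using has_derivative_subset[OF der] by (simp add: \<phi>_def)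
  from has_derivative_in_compose[OF d\<phi> this]
  have "((\<lambda>t. g (\<phi> t)) has_field_derivative (D \<bullet> (b - a))) (at 0 within {0..1})"
    unfolding has_field_derivative_def by (simp add: mult.commute[of _ "D \<bullet> (b - a)"])
  then have "((\<lambda>t. (g (\<phi> t) - g (\<phi> 0)) / (t - 0)) \<longlongrightarrow> D \<bullet> (b - a)) (at 0 within {0..1})"
    by (simp add: has_field_derivative_iff)
  moreover have "at (0::real) within {0..1} = at_right 0" by (rule at_within_Icc_at_right) simp
  ultimately show ?thesis unfolding \<phi>_def by simp
qed

lemma strongly_convex_on_gradient_ineq:
  fixes g :: "'a::euclidean_space \<Rightarrow> real"
  assumes der: "(g has_derivative (\<lambda>h. D \<bullet> h)) (at a within A)"
    and A: "convex A" and a: "a \<in> A" and b: "b \<in> A"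
    and sc: "strongly_convex_on A \<rho> g"
  shows "D \<bullet> (b - a) \<le> g b - g a - \<rho> / 2 * (norm (b - a))\<^sup>2"
proof -
  let ?N = "(norm (b - a))\<^sup>2"
  have lim: "((\<lambda>t::real. g b - g a - \<rho> / 2 * (1 - t) * ?N) \<longlongrightarrow> g b - g a - \<rho> / 2 * (1 - 0) * ?N)
      (at_right 0)"
    by (intro tendsto_intros)
  have "eventually (\<lambda>t. (g (a + t *\<^sub>R (b - a)) - g a) / t \<le> g b - g a - \<rho> / 2 * (1 - t) * ?N)
      (at_right 0)"
    unfolding eventually_at_right_field
  proof (intro exI[of _ 1] conjI allI impI)
    fix t :: real assume t: "0 < t" "t < 1"
    have "g (t *\<^sub>R b + (1 - t) *\<^sub>R a) \<le> t * g b + (1 - t) * g a - \<rho> / 2 * t * (1 - t) * ?N"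
      using sc a b t unfolding strongly_convex_on_def by auto
    moreover have "a + t *\<^sub>R (b - a) = t *\<^sub>R b + (1 - t) *\<^sub>R a" by (simp add: algebra_simps)
    ultimately have "g (a + t *\<^sub>R (b - a)) - g a \<le> t * (g b - g a - \<rho> / 2 * (1 - t) * ?N)"
      by (simp add: algebra_simps)
    then show "(g (a + t *\<^sub>R (b - a)) - g a) / t \<le> g b - g a - \<rho> / 2 * (1 - t) * ?N"
      using t by (simp add: divide_le_eq mult.commute)
  qed simp
  from tendsto_le[OF _ lim segment_difference_quotient_tendsto[OF der A a b] this]
  show ?thesis by simp
qed

lemma minimum_imp_gradient_nonneg:
  fixes g :: "'a::euclidean_space \<Rightarrow> real"
  assumes der: "(g has_derivative (\<lambda>h. D \<bullet> h)) (at a within A)"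
    and A: "convex A" and a: "a \<in> A" and b: "b \<in> A"
    and min: "\<forall>c\<in>A. g a \<le> g c"
  shows "0 \<le> D \<bullet> (b - a)"
proof (rule tendsto_lowerbound[OF segment_difference_quotient_tendsto[OF der A a b]])
  show "eventually (\<lambda>t. 0 \<le> (g (a + t *\<^sub>R (b - a)) - g a) / t) (at_right 0)"
    unfolding eventually_at_right_field
  proof (intro exI[of _ 1] conjI allI impI)
    fix t :: real assume t: "0 < t" "t < 1"
    have "(1 - t) *\<^sub>R a + t *\<^sub>R b \<in> A" using A a b t by (intro convexD) auto
    moreover have "a + t *\<^sub>R (b - a) = (1 - t) *\<^sub>R a + t *\<^sub>R b" by (simp add: algebra_simps)
    ultimately have "a + t *\<^sub>R (b - a) \<in> A" by simp
    then show "0 \<le> (g (a + t *\<^sub>R (b - a)) - g a) / t" using min t by simp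
  qed simp
qed simp

lemma strongly_convex_on_unique_minimizer:
  fixes g :: "'a::euclidean_space \<Rightarrow> real"
  assumes A: "convex A" "compact A" "A \<noteq> {}"
    and cont: "continuous_on A g" and sc: "strongly_convex_on A \<rho> g" and "0 < \<rho>"
  shows "\<exists>!a. a \<in> A \<and> (\<forall>b\<in>A. g a \<le> g b)"
proof -
  obtain a where a: "a \<in> A" "\<forall>b\<in>A. g a \<le> g b"
    using continuous_attains_inf[OF A(2,3) cont] by blast
  moreover have "a' = a" if a': "a' \<in> A" "\<forall>b\<in>A. g a' \<le> g b" for a'
  proof (rule ccontr)
    assume "a' \<noteq> a"
    then have "0 < \<rho> * (norm (a' - a))\<^sup>2" using \<open>0 < \<rho>\<close> by simp
    moreover have "g ((1/2) *\<^sub>R a' + (1 - 1/2) *\<^sub>R a)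
        \<le> 1/2 * g a' + (1 - 1/2) * g a - \<rho> / 2 * (1/2) * (1 - 1/2) * (norm (a' - a))\<^sup>2"
    proof -
      have "\<forall>t. 0 \<le> t \<and> t \<le> 1 \<longrightarrow> g (t *\<^sub>R a' + (1 - t) *\<^sub>R a)
          \<le> t * g a' + (1 - t) * g a - \<rho> / 2 * t * (1 - t) * (norm (a' - a))\<^sup>2"
        using sc a(1) a'(1) unfolding strongly_convex_on_def by blast
      then show ?thesis by (rule allE[where x="1/2"]) simp
    qed
    moreover have "g a = g a'" using a a' by (meson order_antisym)
    moreover have "(1/2) *\<^sub>R a' + (1 - 1/2) *\<^sub>R a \<in> A" using A(1) a a' by (intro convexD) auto
    ultimately show False using a(2) by fastforce
  qed
  ultimately show ?thesis by blast
qed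

text \<open>Comparing the first-order optimality conditions of two minimisers with the gradient
  inequalities of strong convexity gives \<open>\<rho> \<parallel>m y - m y'\<parallel>\<^sup>2 \<le> \<langle>D y (m y') - D y' (m y'), m y' - m y\<rangle>\<close>.\<close>
lemma strongly_convex_argmin_lipschitz:
  fixes g :: "'p::metric_space \<Rightarrow> 'a::euclidean_space \<Rightarrow> real"
  assumes A: "convex A" and \<rho>: "0 < \<rho>"
    and der: "\<And>y a. a \<in> A \<Longrightarrow> (g y has_derivative (\<lambda>h. D y a \<bullet> h)) (at a within A)"
    and sc: "\<And>y. strongly_convex_on A \<rho> (g y)"
    and D_lip: "\<And>y y' a. a \<in> A \<Longrightarrow> norm (D y a - D y' a) \<le> K * dist y y'"
    and m: "\<And>y. m y \<in> A" "\<And>y b. b \<in> A \<Longrightarrow> g y (m y) \<le> g y b"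
  shows "norm (m y - m y') \<le> K / \<rho> * dist y y'"
proof -
  let ?a = "m y" and ?b = "m y'"
  let ?N = "norm (?b - ?a)"
  have "0 \<le> D y ?a \<bullet> (?b - ?a)"
    using minimum_imp_gradient_nonneg[OF der A] m by blast
  moreover have "D y ?a \<bullet> (?b - ?a) \<le> g y ?b - g y ?a - \<rho> / 2 * ?N\<^sup>2"
    using strongly_convex_on_gradient_ineq[OF der A _ _ sc] m by blast
  moreover have "D y ?b \<bullet> (?a - ?b) \<le> g y ?a - g y ?b - \<rho> / 2 * ?N\<^sup>2"
    using strongly_convex_on_gradient_ineq[OF der A _ _ sc] m by (metis norm_minus_commute)
  moreover have "0 \<le> D y' ?b \<bullet> (?a - ?b)"
    using minimum_imp_gradient_nonneg[OF der A] m by blast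
  ultimately have "\<rho> * ?N\<^sup>2 \<le> (D y ?b - D y' ?b) \<bullet> (?b - ?a)"
    by (simp add: inner_diff_left inner_diff_right)
  also have "\<dots> \<le> norm (D y ?b - D y' ?b) * ?N" by (rule norm_cauchy_schwarz)
  also have "\<dots> \<le> K * dist y y' * ?N" by (intro mult_right_mono D_lip m) simp
  finally have "\<rho> * ?N * ?N \<le> K * dist y y' * ?N" by (simp add: power2_eq_square mult.assoc)
  moreover have "0 \<le> K * dist y y'" using D_lip[OF m(1)] norm_ge_zero order_trans by blast
  ultimately have "\<rho> * ?N \<le> K * dist y y'"
    by (cases "?N = 0") (auto simp: mult_le_cancel_right)
  then show ?thesis using \<rho> by (simp add: norm_minus_commute field_simps)
qed

lemma strongly_convex_argmin_measurable:
  fixes g :: "'p::metric_space \<Rightarrow> 'a::euclidean_space \<Rightarrow> real"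
  assumes A: "convex A" "compact A" "A \<noteq> {}" and \<rho>: "0 < \<rho>" and K: "0 \<le> K"
    and der: "\<And>y a. a \<in> A \<Longrightarrow> (g y has_derivative (\<lambda>h. D y a \<bullet> h)) (at a within A)"
    and sc: "\<And>y. strongly_convex_on A \<rho> (g y)"
    and D_lip: "\<And>y y' a. a \<in> A \<Longrightarrow> norm (D y a - D y' a) \<le> K * dist y y'"
  shows "\<forall>y. \<exists>!a. a \<in> A \<and> (\<forall>b\<in>A. g y a \<le> g y b)"
    and "(\<lambda>y. THE a. a \<in> A \<and> (\<forall>b\<in>A. g y a \<le> g y b)) \<in> borel_measurable borel"
proof -
  have "continuous_on A (g y)" for y
    unfolding continuous_on_eq_continuous_within using has_derivative_continuous[OF der] by blast
  then show unique: "\<forall>y. \<exists>!a. a \<in> A \<and> (\<forall>b\<in>A. g y a \<le> g y b)"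
    using strongly_convex_on_unique_minimizer[OF A _ sc \<rho>] by blast
  define m where "m y = (THE a. a \<in> A \<and> (\<forall>b\<in>A. g y a \<le> g y b))" for y
  have m: "m y \<in> A" "\<And>b. b \<in> A \<Longrightarrow> g y (m y) \<le> g y b" for y
    using theI'[OF unique[rule_format, of y]] unfolding m_def by blast+
  have "(K / \<rho>)-lipschitz_on UNIV m"
    using strongly_convex_argmin_lipschitz[OF A(1) \<rho> der sc D_lip m] K \<rho>
    by (intro lipschitz_onI) (auto simp: dist_norm)
  then show "(\<lambda>y. THE a. a \<in> A \<and> (\<forall>b\<in>A. g y a \<le> g y b)) \<in> borel_measurable borel"
    unfolding m_def[symmetric] by (intro borel_measurable_continuous_onI lipschitz_on_continuous_on)
qed

lemma nn_integral_return_borel: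
  fixes y :: "'a::metric_space"
  shows "(\<integral>\<^sup>+a. g a \<partial>return borel y) = g y"
proof -
  have "AE a in return borel y. a = y" by (subst AE_return) auto
  then have "(\<integral>\<^sup>+a. g a \<partial>return borel y) = (\<integral>\<^sup>+a. g y \<partial>return borel y)"
    by (intro nn_integral_cong_AE) auto
  then show ?thesis by (simp add: nn_integral_const)
qed

lemma W1_refl:
  fixes \<mu> :: "'x::{metric_space,second_countable_topology} measure"
  assumes "\<mu> \<in> Prob"
  shows "W1 \<mu> \<mu> = 0"
proof -
  have P: "prob_space \<mu>" and S: "sets \<mu> = sets borel" using assms by (auto simp: Prob_def)
  define \<gamma> where "\<gamma> = distr \<mu> (borel \<Otimes>\<^sub>M borel) (\<lambda>x. (x, x))"
  have m: "(\<lambda>x. (x, x)) \<in> \<mu> \<rightarrow>\<^sub>M (borel \<Otimes>\<^sub>M borel)"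
    unfolding measurable_cong_sets[OF S refl] by (intro measurable_Pair measurable_ident_sets) auto
  have marginal: "distr \<gamma> borel h = \<mu>" if "h \<circ> (\<lambda>x. (x, x)) = id"
    and "h \<in> borel \<Otimes>\<^sub>M borel \<rightarrow>\<^sub>M borel" for h :: "'x \<times> 'x \<Rightarrow> 'x"
    unfolding \<gamma>_def using m that S by (subst distr_distr) (auto simp: id_def distr_id2)
  have "distr \<gamma> borel fst = \<mu>" "distr \<gamma> borel snd = \<mu>"
    by (rule marginal; simp add: comp_def id_def)+
  then have \<gamma>: "\<gamma> \<in> couplings \<mu> \<mu>"
    unfolding couplings_def using prob_space.prob_space_distr[OF P m] by (simp add: \<gamma>_def)
  have "(\<lambda>z. dist (fst z) (snd z)) \<in> borel_measurable (borel \<Otimes>\<^sub>M borel :: ('x \<times> 'x) measure)"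
    by (rule borel_measurable_dist[OF measurable_fst measurable_snd])
  then have "(\<integral>\<^sup>+ z. ennreal (dist (fst z) (snd z)) \<partial>\<gamma>) = (\<integral>\<^sup>+ x. ennreal (dist x x) \<partial>\<mu>)"
    unfolding \<gamma>_def
    by (subst nn_integral_distr[OF m]) (auto intro: measurable_compose[OF _ measurable_ennreal])
  then have "(\<integral>\<^sup>+ z. ennreal (dist (fst z) (snd z)) \<partial>\<gamma>) = 0" by simp
  then have "W1 \<mu> \<mu> \<le> 0" unfolding W1_def by (intro INF_lower2[OF \<gamma>]) simp
  then show ?thesis by simp
qed

lemma ennreal_le_diff_plus:
  fixes r s :: real
  assumes "0 \<le> s"
  shows "ennreal r \<le> ennreal (r - s) + ennreal s"
  using assms by (cases "0 \<le> r - s") (auto simp: ennreal_plus[symmetric] add_increasing ennreal_leI)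

lemma ennreal_diff_le_of_le_plus:
  fixes r s :: real
  assumes le: "ennreal r \<le> R + ennreal s" and "0 \<le> s"
  shows "ennreal (r - s) \<le> R"
proof (cases R)
  case (real q)
  moreover have "ennreal q + ennreal s = ennreal (q + s)" using real \<open>0 \<le> s\<close> by (simp add: ennreal_plus)
  ultimately have "ennreal r \<le> ennreal (q + s)" using le by simp
  then have "r \<le> q + s" using real \<open>0 \<le> s\<close> ennreal_le_iff[of "q + s" r] by simp
  then show ?thesis using real by (simp add: ennreal_leI)
qed simp

lemma ennreal_cost_plus_integral:
  assumes v: "v \<in> borel_measurable q" "\<And>y. 0 \<le> v y" and fin: "(\<integral>\<^sup>+ y. v y \<partial>q) < \<infinity>"
    and "0 \<le> c" "0 \<le> \<beta>"
  shows "ennreal (c + \<beta> * integral\<^sup>L q v) = ennreal c + ennreal \<beta> * (\<integral>\<^sup>+ y. v y \<partial>q)"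
proof -
  have "integrable q v" using v fin by (intro integrableI_nonneg) auto
  then have "(\<integral>\<^sup>+ y. v y \<partial>q) = ennreal (integral\<^sup>L q v)"
    using v by (intro nn_integral_eq_integral) auto
  moreover have "0 \<le> integral\<^sup>L q v" using v by (intro integral_nonneg_AE) auto
  ultimately show ?thesis using assms by (simp add: ennreal_plus ennreal_mult)
qed

lemma nn_integral_le_weight:
  fixes V W :: "'x \<Rightarrow> real"
  assumes "\<And>y. V y \<le> K * W y" and "0 \<le> K" and "W \<in> borel_measurable q"
  shows "(\<integral>\<^sup>+ y. V y \<partial>q) \<le> ennreal K * (\<integral>\<^sup>+ y. W y \<partial>q)"
proof -
  have "(\<integral>\<^sup>+ y. V y \<partial>q) \<le> (\<integral>\<^sup>+ y. ennreal K * W y \<partial>q)"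
    using assms(1,2) by (intro nn_integral_mono) (simp add: ennreal_mult'[symmetric] ennreal_leI)
  also have "\<dots> = ennreal K * (\<integral>\<^sup>+ y. W y \<partial>q)"
    using assms(3) by (intro nn_integral_cmult) measurable
  finally show ?thesis .
qed

lemma PoliciesD:
  assumes "\<pi> \<in> Policies A" and "A \<in> sets borel"
  shows "\<pi> x \<in> space (prob_algebra borel)" "sets (\<pi> x) = sets borel" "AE a in \<pi> x. a \<in> A"
proof -
  show sp: "\<pi> x \<in> space (prob_algebra borel)"
    using assms(1) measurable_space[of \<pi> borel "prob_algebra borel"] by (simp add: Policies_def)
  then show S: "sets (\<pi> x) = sets borel" by (simp add: space_prob_algebra)
  show "AE a in \<pi> x. a \<in> A"
    using sp S assms prob_space.AE_in_set_eq_1[of "\<pi> x" A]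
    by (simp add: Policies_def space_prob_algebra measure_def)
qed

lemma return_in_Policies:
  assumes "f \<in> borel_measurable borel" "\<And>x. f x \<in> A" "A \<in> sets borel"
  shows "(\<lambda>x. return borel (f x)) \<in> Policies A"
  unfolding Policies_def
  using measurable_compose[OF assms(1) measurable_return_prob_space] assms(2,3)
  by (auto simp: emeasure_return)

lemma measurable_closest_point_extension:
  fixes A :: "'a::euclidean_space set"
  assumes h: "(\<lambda>(x, a, \<mu>). h x a \<mu>) \<in> M \<Otimes>\<^sub>M restrict_space borel A \<Otimes>\<^sub>M N \<rightarrow>\<^sub>M K"
    and \<mu>: "\<mu> \<in> space N" and A: "closed A" "convex A" "A \<noteq> {}"
  shows "(\<lambda>(x, a). h x (closest_point A a) \<mu>) \<in> M \<Otimes>\<^sub>M borel \<rightarrow>\<^sub>M K"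
proof -
  have "closest_point A \<in> borel \<rightarrow>\<^sub>M restrict_space borel A"
    using A by (intro measurable_restrict_space2 borel_measurable_continuous_onI
        continuous_on_closest_point) (auto simp: closest_point_in_set)
  then have "(\<lambda>z. (fst z, closest_point A (snd z), \<mu>)) \<in> M \<Otimes>\<^sub>M borel \<rightarrow>\<^sub>M
      M \<Otimes>\<^sub>M restrict_space borel A \<Otimes>\<^sub>M N"
    using \<mu> by (intro measurable_Pair measurable_fst measurable_compose[OF measurable_snd]) auto
  from measurable_compose[OF this h] show ?thesis by (simp add: case_prod_beta)
qed

lemma H2_fixed_point_in_Lambda:
  fixes \<mu> :: "'x::metric_space measure" and Q :: "'x \<Rightarrow> 'a::metric_space \<Rightarrow> real"
  assumes fixed: "H2 c p \<beta> A Q \<mu> = \<mu>" and \<mu>: "\<mu> \<in> Prob"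
  shows "\<mu> \<in> Lambda p (\<lambda>x. return borel (fsel c p \<beta> A x Q \<mu>))"
  unfolding Lambda_def
proof (intro CollectI conjI ballI \<mu>)
  fix B :: "'x set" assume B: "B \<in> sets borel"
  let ?h = "\<lambda>B. \<integral>\<^sup>+ x. emeasure (p x (fsel c p \<beta> A x Q \<mu>) \<mu>) B \<partial>\<mu>"
  have \<mu>_eq: "\<mu> = measure_of UNIV (sets borel) ?h" using fixed unfolding H2_def by simp
  have "measure_space UNIV (sigma_sets UNIV (sets borel)) ?h"
  proof (rule ccontr)
    assume "\<not> ?thesis"
    then have "emeasure \<mu> UNIV = 0" by (subst \<mu>_eq) (simp add: emeasure_measure_of_conv)
    moreover have P: "prob_space \<mu>" and S: "sets \<mu> = sets borel" using \<mu> by (auto simp: Prob_def)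
    then have "emeasure \<mu> UNIV = 1"
      using prob_space.emeasure_space_1[OF P] sets_eq_imp_space_eq[OF S] by simp
    ultimately show False by simp
  qed
  then have "emeasure \<mu> B = ?h B"
    using B by (subst \<mu>_eq) (simp add: emeasure_measure_of_conv sets.sigma_sets_eq[of borel, simplified])
  then show "emeasure \<mu> B = (\<integral>\<^sup>+ x. \<integral>\<^sup>+ a. emeasure (p x a \<mu>) B \<partial>return borel (fsel c p \<beta> A x Q \<mu>) \<partial>\<mu>)"
    by (simp add: nn_integral_return_borel)
qed

lemma wmax_upper:
  assumes w: "continuous_on (UNIV \<times> A) (\<lambda>(x, a). w x a)" and A: "compact A" and a: "a \<in> A"
  shows "w x a \<le> wmax w A x"
proof -
  have "continuous_on A ((\<lambda>(x, a). w x a) \<circ> Pair x)"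
    by (intro continuous_on_compose continuous_intros continuous_on_subset[OF w]) auto
  then have "bdd_above (w x ` A)"
    using A by (intro bounded_imp_bdd_above compact_imp_bounded compact_continuous_image)
      (simp_all add: comp_def)
  then show ?thesis unfolding wmax_def using a by (rule cSUP_upper2) simp
qed

text \<open>As a supremum of continuous functions, \<open>wmax w A\<close> is lower semicontinuous.\<close>
lemma borel_measurable_wmax:
  fixes w :: "'x::topological_space \<Rightarrow> 'a::metric_space \<Rightarrow> real"
  assumes w: "continuous_on (UNIV \<times> A) (\<lambda>(x, a). w x a)" and A: "compact A" "A \<noteq> {}"
  shows "wmax w A \<in> borel_measurable borel"
  unfolding borel_measurable_iff_greater
proof
  fix t
  have "bdd_above (w x ` A)" for x
    using wmax_upper[OF w A(1)] by (auto simp: bdd_above_def)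
  then have eq: "{x \<in> space borel. t < wmax w A x} = (\<Union>a\<in>A. {x. t < w x a})"
    unfolding wmax_def using less_cSUP_iff[OF A(2)] by auto
  have "open {x. t < w x a}" if "a \<in> A" for a
  proof -
    have "continuous_on UNIV ((\<lambda>(x, a). w x a) \<circ> (\<lambda>x. (x, a)))"
      using that by (intro continuous_on_compose continuous_intros continuous_on_subset[OF w]) auto
    then show ?thesis using open_Collect_less[of "\<lambda>_. t" "\<lambda>x. w x a"] by (simp add: comp_def)
  qed
  then have "open (\<Union>a\<in>A. {x. t < w x a})" by (intro open_UN) blast
  then show "{x \<in> space borel. t < wmax w A x} \<in> sets borel" unfolding eq by (rule borel_open)
qed

lemma wmax_ge_1:
  assumes "continuous_on (UNIV \<times> A) (\<lambda>(x, a). w x a)" "\<And>x a. a \<in> A \<Longrightarrow> 1 \<le> w x a"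
    and "compact A" "A \<noteq> {}"
  shows "1 \<le> wmax w A x"
  using assms wmax_upper[OF assms(1,3)] by (meson ex_in_conv order_trans)

lemma Qmin_le:
  assumes "\<And>b. b \<in> A \<Longrightarrow> 0 \<le> Q x b" and "a \<in> A"
  shows "Qmin A Q x \<le> Q x a"
  unfolding Qmin_def using assms by (intro cINF_lower) (auto simp: bdd_below_def)

lemma Qmin_in_value_class:
  assumes Q: "Q \<in> Cset w A M \<beta> \<alpha> L K"
    and w: "continuous_on (UNIV \<times> A) (\<lambda>(x, a). w x a)" "\<And>x a. a \<in> A \<Longrightarrow> 1 \<le> w x a"
    and A: "compact A" "A \<noteq> {}"
  shows "Qmin A Q \<in> {v \<in> Lip (L / (1 - \<beta> * K)) \<inter> Bnd w A (M / (1 - \<beta> * \<alpha>)). \<forall>x. 0 \<le> v x}"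
proof -
  let ?V = "Qmin A Q" and ?L = "L / (1 - \<beta> * K)" and ?K = "M / (1 - \<beta> * \<alpha>)"
  have C: "\<forall>x. \<forall>a\<in>A. 0 \<le> Q x a \<and> \<bar>Q x a\<bar> \<le> ?K * w x a" "\<forall>x y. \<bar>?V x - ?V y\<bar> \<le> ?L * dist x y"
    using Q unfolding Cset_def by blast+
  have Q0: "\<And>x a. a \<in> A \<Longrightarrow> 0 \<le> Q x a" and QK: "\<And>x a. a \<in> A \<Longrightarrow> Q x a \<le> ?K * w x a"
    using C(1) abs_le_D1 by fastforce+
  have lip: "\<And>x y. \<bar>?V x - ?V y\<bar> \<le> ?L * dist x y" using C(2) by blast
  obtain a where a: "a \<in> A" using A(2) by blast
  have Kw: "0 \<le> ?K * w x a" for x using Q0[OF a] QK[OF a] by (rule order_trans)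
  have K0: "0 \<le> ?K"
  proof (rule ccontr)
    assume "\<not> 0 \<le> ?K"
    then have "?K * w x a < 0" for x using w(2)[OF a, of x] by (intro mult_neg_pos) auto
    then show False using Kw not_le by blast
  qed
  have V0: "0 \<le> ?V x" for x unfolding Qmin_def by (rule cINF_greatest[OF A(2) Q0])
  have "?V x \<le> ?K * wmax w A x" for x
  proof -
    have "?V x \<le> Q x a" by (rule Qmin_le[where Q=Q, OF Q0 a])
    also have "\<dots> \<le> ?K * w x a" by (rule QK[OF a])
    also have "\<dots> \<le> ?K * wmax w A x" by (intro mult_left_mono wmax_upper[OF w(1) A(1) a] K0)
    finally show ?thesis .
  qed
  moreover have "(max ?L 0)-lipschitz_on UNIV ?V"
  proof (rule lipschitz_onI)
    fix x y
    have "\<bar>?V x - ?V y\<bar> \<le> max ?L 0 * dist x y"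
      using lip[of x y] mult_right_mono[of ?L "max ?L 0" "dist x y"] by simp
    then show "dist (?V x) (?V y) \<le> max ?L 0 * dist x y" by (simp add: dist_real_def)
  qed simp
  then have "continuous_on UNIV ?V" by (rule lipschitz_on_continuous_on)
  moreover from this have "?V \<in> borel_measurable borel" by (rule borel_measurable_continuous_onI)
  ultimately show ?thesis
    using V0 lip unfolding Lip_def Bnd_def by simp
qed

text \<open>At a fixed point of \<open>H1\<close>, \<open>Q x\<close> coincides on \<open>A\<close> with \<open>Fop c p \<beta> x (Qmin A Q) \<mu>\<close>.\<close>
lemma H1_fixed_point_argmin:
  fixes A :: "'a::euclidean_space set" and Q :: "'x::metric_space \<Rightarrow> 'a \<Rightarrow> real"
  assumes A: "convex A" "compact A" "A \<noteq> {}" and \<rho>: "0 < \<rho>" and K: "0 \<le> K"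
    and fixed: "\<And>x a. a \<in> A \<Longrightarrow> H1 c p \<beta> A Q \<mu> x a = Q x a"
    and der: "\<And>x a. a \<in> A \<Longrightarrow>
        (Fop c p \<beta> x (Qmin A Q) \<mu> has_derivative (\<lambda>h. D x a \<bullet> h)) (at a within A)"
    and sc: "\<And>x. strongly_convex_on A \<rho> (Fop c p \<beta> x (Qmin A Q) \<mu>)"
    and D_lip: "\<And>x x' a. a \<in> A \<Longrightarrow> norm (D x a - D x' a) \<le> K * dist x x'"
  shows "\<forall>x. \<exists>!a. a \<in> A \<and> (\<forall>b\<in>A. Q x a \<le> Q x b)"
    and "(\<lambda>x. THE a. a \<in> A \<and> (\<forall>b\<in>A. Q x a \<le> Q x b)) \<in> borel_measurable borel"
    and "fsel c p \<beta> A x Q \<mu> = (THE a. a \<in> A \<and> (\<forall>b\<in>A. Q x a \<le> Q x b))"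
proof -
  have argmin_iff: "(a \<in> A \<and> (\<forall>b\<in>A. Q x a \<le> Q x b)) \<longleftrightarrow>
      (a \<in> A \<and> (\<forall>b\<in>A. Fop c p \<beta> x (Qmin A Q) \<mu> a \<le> Fop c p \<beta> x (Qmin A Q) \<mu> b))" for x a
    using fixed by (auto simp: H1_def Fop_def)
  note argmin = strongly_convex_argmin_measurable[OF A \<rho> K der sc D_lip]
  show "\<forall>x. \<exists>!a. a \<in> A \<and> (\<forall>b\<in>A. Q x a \<le> Q x b)"
    unfolding argmin_iff by (rule argmin(1))
  show "(\<lambda>x. THE a. a \<in> A \<and> (\<forall>b\<in>A. Q x a \<le> Q x b)) \<in> borel_measurable borel"
    unfolding argmin_iff by (rule argmin(2))
  show "fsel c p \<beta> A x Q \<mu> = (THE a. a \<in> A \<and> (\<forall>b\<in>A. Q x a \<le> Q x b))"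
    unfolding fsel_def argmin_iff ..
qed

lemma measurable_policy_bind:
  assumes "\<pi> \<in> Policies A" and "(\<lambda>(x, a). P x a) \<in> borel \<Otimes>\<^sub>M borel \<rightarrow>\<^sub>M prob_algebra borel"
  shows "(\<lambda>x. \<pi> x \<bind> P x) \<in> borel \<rightarrow>\<^sub>M prob_algebra borel"
  using assms by (intro measurable_bind_prob_space2) (auto simp: Policies_def)

lemma measurable_nn_integral_policy:
  assumes "\<pi> \<in> Policies A" and "(\<lambda>(x, a). h x a) \<in> borel_measurable (borel \<Otimes>\<^sub>M borel)"
  shows "(\<lambda>x. \<integral>\<^sup>+ a. h x a \<partial>\<pi> x) \<in> borel_measurable borel"
  using assms measurable_prob_algebraD
  by (intro nn_integral_measurable_subprob_algebra2) (auto simp: Policies_def)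

locale frozen_mdp =
  fixes A :: "'a::euclidean_space set"
    and p :: "'x::topological_space \<Rightarrow> 'a \<Rightarrow> 'x measure \<Rightarrow> 'x measure"
    and c :: "'x \<Rightarrow> 'a \<Rightarrow> 'x measure \<Rightarrow> real"
    and \<beta> :: real
    and \<mu> :: "'x measure"
  assumes A_closed: "closed A" and A_convex: "convex A" and A_nonempty: "A \<noteq> {}"
    and p_meas: "(\<lambda>(x, a, \<mu>). p x a \<mu>) \<in>
        borel \<Otimes>\<^sub>M restrict_space borel A \<Otimes>\<^sub>M prob_algebra borel \<rightarrow>\<^sub>M prob_algebra borel"
    and c_meas: "(\<lambda>(x, a, \<mu>). c x a \<mu>) \<in>
        borel_measurable (borel \<Otimes>\<^sub>M restrict_space borel A \<Otimes>\<^sub>M prob_algebra borel)"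
    and \<mu>_prob: "\<mu> \<in> space (prob_algebra borel)"
    and \<beta>_nonneg: "0 \<le> \<beta>"
begin

text \<open>Projecting actions onto \<open>A\<close> extends the frozen kernel and cost measurably to
  \<open>borel \<Otimes>\<^sub>M borel\<close>, where the Giry-monad lemmas apply.\<close>
definition P :: "'x \<Rightarrow> 'a \<Rightarrow> 'x measure" where
  "P x a = p x (closest_point A a) \<mu>"

definition C :: "'x \<Rightarrow> 'a \<Rightarrow> ennreal" where
  "C x a = ennreal (c x (closest_point A a) \<mu>)"

lemma A_borel: "A \<in> sets borel"
  using A_closed by simp

lemma P_eq: "a \<in> A \<Longrightarrow> P x a = p x a \<mu>"
  by (simp add: P_def closest_point_self)

lemma C_eq: "a \<in> A \<Longrightarrow> C x a = ennreal (c x a \<mu>)"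
  by (simp add: C_def closest_point_self)

lemma P_measurable: "(\<lambda>(x, a). P x a) \<in> borel \<Otimes>\<^sub>M borel \<rightarrow>\<^sub>M prob_algebra borel"
  unfolding P_def
  by (rule measurable_closest_point_extension[OF p_meas \<mu>_prob A_closed A_convex A_nonempty])

lemma C_measurable: "(\<lambda>(x, a). C x a) \<in> borel_measurable (borel \<Otimes>\<^sub>M borel)"
  using measurable_compose[OF measurable_closest_point_extension[OF c_meas \<mu>_prob A_closed
      A_convex A_nonempty] measurable_ennreal]
  by (simp add: C_def case_prod_beta)

lemma sets_p: "a \<in> A \<Longrightarrow> sets (p x a \<mu>) = sets borel"
  using measurable_space[OF P_measurable, of "(x, a)"] by (simp add: P_eq space_prob_algebra space_pair_measure)

lemma measurable_nn_integral_P: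
  assumes "g \<in> borel_measurable borel"
  shows "(\<lambda>(x, a). \<integral>\<^sup>+ y. g y \<partial>P x a) \<in> borel_measurable (borel \<Otimes>\<^sub>M borel)"
  using measurable_compose[OF measurable_prob_algebraD[OF P_measurable]
      nn_integral_measurable_subprob_algebra[OF assms]]
  by (simp add: case_prod_beta)

lemma state_law_Suc_bind:
  assumes \<pi>: "\<pi> \<in> Policies A" and S: "state_law p \<pi> \<mu> \<mu>0 t \<in> space (prob_algebra borel)"
  shows "state_law p \<pi> \<mu> \<mu>0 (Suc t) = state_law p \<pi> \<mu> \<mu>0 t \<bind> (\<lambda>x. \<pi> x \<bind> P x)"
proof -
  let ?S = "state_law p \<pi> \<mu> \<mu>0 t" and ?K = "\<lambda>x. \<pi> x \<bind> P x"
  have K: "?K \<in> borel \<rightarrow>\<^sub>M prob_algebra borel" by (rule measurable_policy_bind[OF \<pi> P_measurable])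
  have sets_bind: "sets (?S \<bind> ?K) = sets borel" by (rule sets_bind'[OF S K])
  have "?S \<bind> ?K = measure_of UNIV (sets borel) (emeasure (?S \<bind> ?K))"
    by (metis measure_of_of_measure sets_bind sets_eq_imp_space_eq space_borel)
  also have "\<dots> = measure_of UNIV (sets borel) (\<lambda>B. \<integral>\<^sup>+ x. \<integral>\<^sup>+ a. emeasure (p x a \<mu>) B \<partial>\<pi> x \<partial>?S)"
  proof (rule measure_of_eq)
    fix B :: "'x set" assume "B \<in> sigma_sets UNIV (sets borel)"
    then have B: "B \<in> sets borel" by (metis sets.sigma_sets_eq space_borel)
    have "emeasure (?K x) B = \<integral>\<^sup>+ a. emeasure (p x a \<mu>) B \<partial>\<pi> x" for x
    proof -
      have "P x \<in> borel \<rightarrow>\<^sub>M prob_algebra borel"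
        using measurable_Pair2[OF P_measurable, of x] by simp
      then have "emeasure (?K x) B = \<integral>\<^sup>+ a. emeasure (P x a) B \<partial>\<pi> x"
        using PoliciesD(1)[OF \<pi> A_borel] B by (intro emeasure_bind_prob_algebra)
      also have "\<dots> = \<integral>\<^sup>+ a. emeasure (p x a \<mu>) B \<partial>\<pi> x"
        using PoliciesD(3)[OF \<pi> A_borel, of x] by (intro nn_integral_cong_AE) (auto simp: P_eq)
      finally show ?thesis .
    qed
    then show "emeasure (?S \<bind> ?K) B = \<integral>\<^sup>+ x. \<integral>\<^sup>+ a. emeasure (p x a \<mu>) B \<partial>\<pi> x \<partial>?S"
      by (simp add: emeasure_bind_prob_algebra[OF S K B])
  qed simp
  finally show ?thesis by simp
qed

lemma state_law_prob:
  assumes \<pi>: "\<pi> \<in> Policies A" and \<mu>0: "\<mu>0 \<in> space (prob_algebra borel)"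
  shows "state_law p \<pi> \<mu> \<mu>0 t \<in> space (prob_algebra borel)"
proof (induction t)
  case (Suc t)
  have K: "(\<lambda>x. \<pi> x \<bind> P x) \<in> borel \<rightarrow>\<^sub>M prob_algebra borel"
    by (rule measurable_policy_bind[OF \<pi> P_measurable])
  show ?case
    unfolding state_law_Suc_bind[OF \<pi> Suc]
    using sets_bind'[OF Suc K] prob_space_bind'[OF Suc K] by (simp add: space_prob_algebra)
qed (simp add: \<mu>0)

lemma sets_state_law:
  "\<pi> \<in> Policies A \<Longrightarrow> \<mu>0 \<in> space (prob_algebra borel) \<Longrightarrow> sets (state_law p \<pi> \<mu> \<mu>0 t) = sets borel"
  using state_law_prob by (simp add: space_prob_algebra)

lemma nn_integral_state_law_Suc:
  assumes \<pi>: "\<pi> \<in> Policies A" and \<mu>0: "\<mu>0 \<in> space (prob_algebra borel)"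
    and g: "g \<in> borel_measurable borel"
  shows "(\<integral>\<^sup>+ y. g y \<partial>state_law p \<pi> \<mu> \<mu>0 (Suc t)) =
     (\<integral>\<^sup>+ x. \<integral>\<^sup>+ a. \<integral>\<^sup>+ y. g y \<partial>P x a \<partial>\<pi> x \<partial>state_law p \<pi> \<mu> \<mu>0 t)"
proof -
  let ?S = "state_law p \<pi> \<mu> \<mu>0 t"
  have S: "?S \<in> space (prob_algebra borel)" by (rule state_law_prob[OF \<pi> \<mu>0])
  have K: "(\<lambda>x. \<pi> x \<bind> P x) \<in> ?S \<rightarrow>\<^sub>M subprob_algebra borel"
    using measurable_prob_algebraD[OF measurable_policy_bind[OF \<pi> P_measurable]]
      measurable_cong_sets[OF sets_state_law[OF \<pi> \<mu>0] refl] by blast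
  have Px: "P x \<in> \<pi> x \<rightarrow>\<^sub>M subprob_algebra borel" for x
    unfolding measurable_cong_sets[OF PoliciesD(2)[OF \<pi> A_borel, of x] refl]
    using measurable_prob_algebraD[OF measurable_Pair2[OF P_measurable, of x]] by simp
  show ?thesis
    unfolding state_law_Suc_bind[OF \<pi> S]
    by (simp add: nn_integral_bind[OF g K] nn_integral_bind[OF g Px])
qed

definition stage_cost :: "('x \<Rightarrow> 'a measure) \<Rightarrow> 'x measure \<Rightarrow> nat \<Rightarrow> ennreal" where
  "stage_cost \<pi> \<mu>0 t = (\<integral>\<^sup>+ x. \<integral>\<^sup>+ a. ennreal (c x a \<mu>) \<partial>\<pi> x \<partial>state_law p \<pi> \<mu> \<mu>0 t)"

lemma Jcost_eq: "Jcost c p \<beta> \<pi> \<mu> \<mu>0 = (\<Sum>t. ennreal (\<beta> ^ t) * stage_cost \<pi> \<mu>0 t)"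
  unfolding Jcost_def stage_cost_def ..

lemma Jcost_return_le:
  assumes f: "f \<in> borel_measurable borel" "\<And>x. f x \<in> A"
    and V: "V \<in> borel_measurable borel"
    and bellman: "\<And>x. ennreal (V x) = ennreal (c x (f x) \<mu>) + ennreal \<beta> * (\<integral>\<^sup>+ y. V y \<partial>p x (f x) \<mu>)"
    and \<mu>0: "\<mu>0 \<in> space (prob_algebra borel)"
  shows "Jcost c p \<beta> (\<lambda>x. return borel (f x)) \<mu> \<mu>0 \<le> (\<integral>\<^sup>+ y. V y \<partial>\<mu>0)"
proof -
  let ?\<pi> = "\<lambda>x. return borel (f x)"
  let ?S = "state_law p ?\<pi> \<mu> \<mu>0"
  let ?v = "\<lambda>t. \<integral>\<^sup>+ y. V y \<partial>?S t"
  have \<pi>: "?\<pi> \<in> Policies A" by (rule return_in_Policies[OF f A_borel])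
  have graph: "(\<lambda>x. (x, f x)) \<in> borel \<rightarrow>\<^sub>M borel \<Otimes>\<^sub>M borel"
    using f(1) by measurable
  have meas_S: "g \<in> borel_measurable (?S t)" if "g \<in> borel_measurable borel" for g t
    using that measurable_cong_sets[OF sets_state_law[OF \<pi> \<mu>0] refl] by blast
  have Ve: "(\<lambda>y. ennreal (V y)) \<in> borel_measurable borel" using V by measurable
  have step: "?v t = stage_cost ?\<pi> \<mu>0 t + ennreal \<beta> * ?v (Suc t)" for t
  proof -
    have cost: "(\<lambda>x. C x (f x)) \<in> borel_measurable borel"
      using measurable_compose[OF graph C_measurable] by simp
    have next_value: "(\<lambda>x. \<integral>\<^sup>+ y. V y \<partial>P x (f x)) \<in> borel_measurable borel"
      using measurable_compose[OF graph measurable_nn_integral_P[OF Ve]] by simp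
    have pointwise: "ennreal (V x) = C x (f x) + ennreal \<beta> * (\<integral>\<^sup>+ y. V y \<partial>P x (f x))" for x
      unfolding C_eq[OF f(2)] P_eq[OF f(2)] by (rule bellman)
    have "?v t = (\<integral>\<^sup>+ x. C x (f x) + ennreal \<beta> * (\<integral>\<^sup>+ y. V y \<partial>P x (f x)) \<partial>?S t)"
      by (rule nn_integral_cong, rule pointwise)
    also have "\<dots> = (\<integral>\<^sup>+ x. C x (f x) \<partial>?S t) + ennreal \<beta> * (\<integral>\<^sup>+ x. \<integral>\<^sup>+ y. V y \<partial>P x (f x) \<partial>?S t)"
      using meas_S[OF cost] meas_S[OF next_value] by (simp add: nn_integral_add nn_integral_cmult)
    also have "(\<integral>\<^sup>+ x. C x (f x) \<partial>?S t) = stage_cost ?\<pi> \<mu>0 t"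
      using f(2) by (simp add: stage_cost_def nn_integral_return_borel C_eq)
    also have "(\<integral>\<^sup>+ x. \<integral>\<^sup>+ y. V y \<partial>P x (f x) \<partial>?S t) = ?v (Suc t)"
      unfolding nn_integral_state_law_Suc[OF \<pi> \<mu>0 Ve] by (simp add: nn_integral_return_borel)
    finally show ?thesis .
  qed
  have unrolled: "?v 0 = (\<Sum>s<n. ennreal (\<beta> ^ s) * stage_cost ?\<pi> \<mu>0 s) + ennreal (\<beta> ^ n) * ?v n" for n
  proof (induction n)
    case (Suc n)
    have "ennreal (\<beta> ^ n) * ennreal \<beta> = ennreal (\<beta> ^ Suc n)"
      using \<beta>_nonneg by (simp add: ennreal_mult[symmetric] mult.commute)
    then have "ennreal (\<beta> ^ n) * ?v n
        = ennreal (\<beta> ^ n) * stage_cost ?\<pi> \<mu>0 n + ennreal (\<beta> ^ Suc n) * ?v (Suc n)"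
      unfolding step[of n] distrib_left mult.assoc[symmetric] by simp
    then show ?case using Suc by (simp add: add.assoc)
  qed simp
  show ?thesis
    unfolding Jcost_eq suminf_eq_SUP
  proof (rule SUP_least)
    show "(\<Sum>s<n. ennreal (\<beta> ^ s) * stage_cost ?\<pi> \<mu>0 s) \<le> (\<integral>\<^sup>+ y. V y \<partial>\<mu>0)" for n
      using unrolled[of n] by simp
  qed
qed

context
  fixes V W :: "'x \<Rightarrow> real" and K \<gamma> :: real
  assumes V_meas: "V \<in> borel_measurable borel" and W_meas: "W \<in> borel_measurable borel"
    and W_nonneg: "\<And>x. 0 \<le> W x" and K_nonneg: "0 \<le> K" and V_le: "\<And>x. V x \<le> K * W x"
    and \<gamma>_nonneg: "0 \<le> \<gamma>" and contraction: "\<beta> * \<gamma> < 1"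
    and drift: "\<And>x a. a \<in> A \<Longrightarrow> (\<integral>\<^sup>+ y. W y \<partial>p x a \<mu>) \<le> ennreal (\<gamma> * W x)"
    and bellman_le: "\<And>x a. a \<in> A \<Longrightarrow>
        ennreal (V x) \<le> ennreal (c x a \<mu>) + ennreal \<beta> * (\<integral>\<^sup>+ y. V y \<partial>p x a \<mu>)"
begin

text \<open>\<open>V\<close> need not be integrable along an arbitrary policy, so the Bellman inequality is iterated
  on the truncations \<open>V - (\<beta>\<gamma>)\<^sup>n K W\<close>, which vanish at \<open>n = 0\<close> and increase to \<open>V\<close>; the drift
  condition makes one Bellman step raise the truncation level by one.\<close>
definition truncation :: "nat \<Rightarrow> 'x \<Rightarrow> ennreal" where
  "truncation n x = ennreal (V x - (\<beta> * \<gamma>) ^ n * K * W x)"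

lemma truncation_measurable: "truncation n \<in> borel_measurable borel"
  unfolding truncation_def using V_meas W_meas by measurable

lemma truncation_0: "truncation 0 = (\<lambda>_. 0)"
  using V_le by (simp add: fun_eq_iff truncation_def ennreal_eq_0_iff)

lemma nn_integral_le_truncation:
  assumes a: "a \<in> A"
  shows "(\<integral>\<^sup>+ y. V y \<partial>p x a \<mu>)
    \<le> (\<integral>\<^sup>+ y. truncation n y \<partial>p x a \<mu>) + ennreal ((\<beta> * \<gamma>) ^ n * K * (\<gamma> * W x))"
proof -
  let ?e = "(\<beta> * \<gamma>) ^ n * K"
  have e: "0 \<le> ?e" using \<beta>_nonneg \<gamma>_nonneg K_nonneg by simp
  have meas: "g \<in> borel_measurable (p x a \<mu>)" if "g \<in> borel_measurable borel" for g :: "'x \<Rightarrow> ennreal"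
    using that measurable_cong_sets[OF sets_p[OF a] refl] by blast
  have "ennreal (V y) \<le> truncation n y + ennreal ?e * W y" for y
  proof -
    have "ennreal (V y) \<le> ennreal (V y - ?e * W y) + ennreal (?e * W y)"
      using e W_nonneg by (intro ennreal_le_diff_plus) simp
    then show ?thesis unfolding truncation_def using e W_nonneg by (simp add: ennreal_mult)
  qed
  then have "(\<integral>\<^sup>+ y. V y \<partial>p x a \<mu>) \<le> (\<integral>\<^sup>+ y. truncation n y + ennreal ?e * W y \<partial>p x a \<mu>)"
    by (intro nn_integral_mono)
  also have "\<dots> = (\<integral>\<^sup>+ y. truncation n y \<partial>p x a \<mu>) + ennreal ?e * (\<integral>\<^sup>+ y. W y \<partial>p x a \<mu>)"
    using meas[OF truncation_measurable] meas[OF measurable_compose[OF W_meas measurable_ennreal]]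
    by (simp add: nn_integral_add nn_integral_cmult)
  also have "\<dots> \<le> (\<integral>\<^sup>+ y. truncation n y \<partial>p x a \<mu>) + ennreal (?e * (\<gamma> * W x))"
    using mult_left_mono[OF drift[OF a], of "ennreal ?e"] e \<gamma>_nonneg W_nonneg
    by (simp add: add_left_mono ennreal_mult)
  finally show ?thesis .
qed

lemma truncation_bellman:
  assumes a: "a \<in> A"
  shows "truncation (Suc n) x \<le> ennreal (c x a \<mu>) + ennreal \<beta> * (\<integral>\<^sup>+ y. truncation n y \<partial>p x a \<mu>)"
proof -
  let ?e = "(\<beta> * \<gamma>) ^ n * K"
  have "ennreal (V x) \<le> ennreal (c x a \<mu>) + ennreal \<beta> * (\<integral>\<^sup>+ y. V y \<partial>p x a \<mu>)"
    by (rule bellman_le[OF a])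
  also have "\<dots> \<le> ennreal (c x a \<mu>)
      + ennreal \<beta> * ((\<integral>\<^sup>+ y. truncation n y \<partial>p x a \<mu>) + ennreal (?e * (\<gamma> * W x)))"
    by (intro add_left_mono mult_left_mono nn_integral_le_truncation[OF a]) simp
  also have "\<dots> = ennreal (c x a \<mu>) + ennreal \<beta> * (\<integral>\<^sup>+ y. truncation n y \<partial>p x a \<mu>)
      + ennreal \<beta> * ennreal (?e * (\<gamma> * W x))"
    by (simp add: distrib_left add.assoc)
  also have "ennreal \<beta> * ennreal (?e * (\<gamma> * W x)) = ennreal (\<beta> * (?e * (\<gamma> * W x)))"
    using \<beta>_nonneg \<gamma>_nonneg K_nonneg W_nonneg by (intro ennreal_mult[symmetric]) auto
  also have "\<beta> * (?e * (\<gamma> * W x)) = (\<beta> * \<gamma>) ^ Suc n * K * W x"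
    by (simp add: algebra_simps)
  finally show ?thesis
    unfolding truncation_def
    by (rule ennreal_diff_le_of_le_plus) (use \<beta>_nonneg \<gamma>_nonneg K_nonneg W_nonneg[of x] in simp)
qed

lemma truncation_le_policy_average:
  assumes \<pi>: "\<pi> \<in> Policies A"
  shows "truncation (Suc n) x
    \<le> (\<integral>\<^sup>+ a. C x a \<partial>\<pi> x) + ennreal \<beta> * (\<integral>\<^sup>+ a. \<integral>\<^sup>+ y. truncation n y \<partial>P x a \<partial>\<pi> x)"
proof -
  let ?I = "\<lambda>a. \<integral>\<^sup>+ y. truncation n y \<partial>P x a"
  have on_section: "h x \<in> borel_measurable (\<pi> x)"
    if "(\<lambda>(x, a). h x a) \<in> borel_measurable (borel \<Otimes>\<^sub>M borel)" for h
    unfolding measurable_cong_sets[OF PoliciesD(2)[OF \<pi> A_borel, of x] refl]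
    using measurable_Pair2[OF that, of x] by simp
  have "truncation (Suc n) x = (\<integral>\<^sup>+ a. truncation (Suc n) x \<partial>\<pi> x)"
    using PoliciesD(1)[OF \<pi> A_borel, of x] prob_space.emeasure_space_1[of "\<pi> x"]
    by (simp add: nn_integral_const space_prob_algebra)
  also have "\<dots> \<le> (\<integral>\<^sup>+ a. C x a + ennreal \<beta> * ?I a \<partial>\<pi> x)"
  proof (rule nn_integral_mono_AE)
    show "AE a in \<pi> x. truncation (Suc n) x \<le> C x a + ennreal \<beta> * ?I a"
      using PoliciesD(3)[OF \<pi> A_borel, of x]
    proof (rule AE_mp, intro AE_I2 impI)
      fix a assume a: "a \<in> A"
      show "truncation (Suc n) x \<le> C x a + ennreal \<beta> * ?I a"
        using truncation_bellman[OF a, of n x] by (simp only: C_eq[OF a] P_eq[OF a])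
    qed
  qed
  also have "\<dots> = (\<integral>\<^sup>+ a. C x a \<partial>\<pi> x) + ennreal \<beta> * (\<integral>\<^sup>+ a. ?I a \<partial>\<pi> x)"
    using on_section[OF C_measurable] on_section[OF measurable_nn_integral_P[OF truncation_measurable]]
    by (simp add: nn_integral_add nn_integral_cmult)
  finally show ?thesis .
qed

lemma truncation_step:
  assumes \<pi>: "\<pi> \<in> Policies A" and \<mu>0: "\<mu>0 \<in> space (prob_algebra borel)"
  shows "(\<integral>\<^sup>+ x. truncation (Suc n) x \<partial>state_law p \<pi> \<mu> \<mu>0 t)
      \<le> stage_cost \<pi> \<mu>0 t + ennreal \<beta> * (\<integral>\<^sup>+ x. truncation n x \<partial>state_law p \<pi> \<mu> \<mu>0 (Suc t))"
proof -
  let ?S = "state_law p \<pi> \<mu> \<mu>0 t" and ?I = "\<lambda>x a. \<integral>\<^sup>+ y. truncation n y \<partial>P x a"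
  have on_S: "g \<in> borel_measurable ?S" if "g \<in> borel_measurable borel" for g :: "'x \<Rightarrow> ennreal"
    using that measurable_cong_sets[OF sets_state_law[OF \<pi> \<mu>0] refl] by blast
  have "(\<integral>\<^sup>+ x. truncation (Suc n) x \<partial>?S)
      \<le> (\<integral>\<^sup>+ x. (\<integral>\<^sup>+ a. C x a \<partial>\<pi> x) + ennreal \<beta> * (\<integral>\<^sup>+ a. ?I x a \<partial>\<pi> x) \<partial>?S)"
    by (intro nn_integral_mono truncation_le_policy_average[OF \<pi>])
  also have "\<dots> = (\<integral>\<^sup>+ x. \<integral>\<^sup>+ a. C x a \<partial>\<pi> x \<partial>?S) + ennreal \<beta> * (\<integral>\<^sup>+ x. \<integral>\<^sup>+ a. ?I x a \<partial>\<pi> x \<partial>?S)"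
    using on_S[OF measurable_nn_integral_policy[OF \<pi> C_measurable]]
      on_S[OF measurable_nn_integral_policy[OF \<pi> measurable_nn_integral_P[OF truncation_measurable]]]
    by (simp add: nn_integral_add nn_integral_cmult)
  also have "(\<integral>\<^sup>+ x. \<integral>\<^sup>+ a. C x a \<partial>\<pi> x \<partial>?S) = stage_cost \<pi> \<mu>0 t"
    unfolding stage_cost_def
  proof (rule nn_integral_cong, rule nn_integral_cong_AE)
    fix x
    show "AE a in \<pi> x. C x a = ennreal (c x a \<mu>)"
      using PoliciesD(3)[OF \<pi> A_borel, of x] by (rule AE_mp) (auto intro!: AE_I2 simp: C_eq)
  qed
  also have "(\<integral>\<^sup>+ x. \<integral>\<^sup>+ a. ?I x a \<partial>\<pi> x \<partial>?S) = (\<integral>\<^sup>+ x. truncation n x \<partial>state_law p \<pi> \<mu> \<mu>0 (Suc t))"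
    by (rule nn_integral_state_law_Suc[OF \<pi> \<mu>0 truncation_measurable, symmetric])
  finally show ?thesis .
qed

lemma truncation_le_partial_cost:
  assumes \<pi>: "\<pi> \<in> Policies A" and \<mu>0: "\<mu>0 \<in> space (prob_algebra borel)"
  shows "(\<integral>\<^sup>+ x. truncation n x \<partial>state_law p \<pi> \<mu> \<mu>0 t)
      \<le> (\<Sum>s<n. ennreal (\<beta> ^ s) * stage_cost \<pi> \<mu>0 (t + s))"
proof (induction n arbitrary: t)
  case (Suc n)
  have "(\<integral>\<^sup>+ x. truncation (Suc n) x \<partial>state_law p \<pi> \<mu> \<mu>0 t)
      \<le> stage_cost \<pi> \<mu>0 t + ennreal \<beta> * (\<Sum>s<n. ennreal (\<beta> ^ s) * stage_cost \<pi> \<mu>0 (Suc t + s))"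
    using truncation_step[OF \<pi> \<mu>0, where n=n and t=t] Suc.IH[of "Suc t"]
    by (meson add_left_mono mult_left_mono order_trans zero_le)
  also have "\<dots> = (\<Sum>s<Suc n. ennreal (\<beta> ^ s) * stage_cost \<pi> \<mu>0 (t + s))"
  proof -
    have "ennreal \<beta> * (ennreal (\<beta> ^ s) * stage_cost \<pi> \<mu>0 (Suc t + s))
        = ennreal (\<beta> ^ Suc s) * stage_cost \<pi> \<mu>0 (t + Suc s)" for s
      using \<beta>_nonneg by (simp add: mult.assoc[symmetric] ennreal_mult[symmetric])
    then show ?thesis unfolding sum.lessThan_Suc_shift sum_distrib_left by simp
  qed
  finally show ?case .
qed (simp add: truncation_0)

lemma SUP_truncation: "(SUP n. truncation n x) = ennreal (V x)"
  and incseq_truncation: "incseq truncation"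
proof -
  have "(\<beta> * \<gamma>) ^ Suc n * (K * W x) \<le> (\<beta> * \<gamma>) ^ n * (K * W x)" for n x
    using \<beta>_nonneg \<gamma>_nonneg contraction K_nonneg W_nonneg[of x]
    by (intro mult_right_mono power_decreasing) auto
  then show inc: "incseq truncation"
    unfolding truncation_def by (intro incseq_SucI le_funI ennreal_leI) (simp add: mult.assoc)
  have "(\<lambda>n. truncation n x) \<longlonglongrightarrow> (SUP n. truncation n x)"
    using inc by (intro LIMSEQ_SUP) (simp add: incseq_def le_fun_def)
  moreover have "(\<lambda>n. truncation n x) \<longlonglongrightarrow> ennreal (V x - 0 * K * W x)"
    unfolding truncation_def using \<beta>_nonneg \<gamma>_nonneg contraction
    by (intro tendsto_ennrealI tendsto_intros LIMSEQ_power_zero) simp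
  ultimately show "(SUP n. truncation n x) = ennreal (V x)" by (simp add: LIMSEQ_unique)
qed

lemma nn_integral_le_Jcost:
  assumes \<pi>: "\<pi> \<in> Policies A" and \<mu>0: "\<mu>0 \<in> space (prob_algebra borel)"
  shows "(\<integral>\<^sup>+ y. V y \<partial>\<mu>0) \<le> Jcost c p \<beta> \<pi> \<mu> \<mu>0"
proof -
  have "(\<integral>\<^sup>+ y. V y \<partial>\<mu>0) = (\<integral>\<^sup>+ y. (SUP n. truncation n y) \<partial>\<mu>0)"
    by (simp add: SUP_truncation)
  also have "\<dots> = (SUP n. \<integral>\<^sup>+ y. truncation n y \<partial>\<mu>0)"
  proof (rule nn_integral_monotone_convergence_SUP[OF incseq_truncation])
    have "sets \<mu>0 = sets borel" using \<mu>0 by (simp add: space_prob_algebra)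
    then show "truncation n \<in> borel_measurable \<mu>0" for n
      using truncation_measurable measurable_cong_sets by blast
  qed
  also have "\<dots> \<le> (\<Sum>s. ennreal (\<beta> ^ s) * stage_cost \<pi> \<mu>0 s)"
  proof (rule SUP_least)
    fix n
    have "(\<integral>\<^sup>+ y. truncation n y \<partial>\<mu>0) \<le> (\<Sum>s<n. ennreal (\<beta> ^ s) * stage_cost \<pi> \<mu>0 s)"
      using truncation_le_partial_cost[OF \<pi> \<mu>0, where n=n and t=0] by simp
    also have "\<dots> \<le> (\<Sum>s. ennreal (\<beta> ^ s) * stage_cost \<pi> \<mu>0 s)" by (simp add: sum_le_suminf)
    finally show "(\<integral>\<^sup>+ y. truncation n y \<partial>\<mu>0) \<le> (\<Sum>s. ennreal (\<beta> ^ s) * stage_cost \<pi> \<mu>0 s)" .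
  qed
  finally show ?thesis unfolding Jcost_eq .
qed

lemma return_in_Psi:
  assumes f: "f \<in> borel_measurable borel" "\<And>x. f x \<in> A"
    and bellman: "\<And>x. ennreal (V x) = ennreal (c x (f x) \<mu>) + ennreal \<beta> * (\<integral>\<^sup>+ y. V y \<partial>p x (f x) \<mu>)"
  shows "(\<lambda>x. return borel (f x)) \<in> Psi c p \<beta> A \<mu>"
  unfolding Psi_def
  using return_in_Policies[OF f A_borel] Jcost_return_le[OF f V_meas bellman \<mu>_prob]
    nn_integral_le_Jcost[OF _ \<mu>_prob]
  by (blast intro: order_trans)

end

lemma H1_fixed_point_bellman:
  assumes fixed: "H1 c p \<beta> A Q \<mu> x a = Q x a" and a: "a \<in> A" and c: "0 \<le> c x a \<mu>"
    and V: "Qmin A Q \<in> borel_measurable borel" "\<And>y. 0 \<le> Qmin A Q y"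
    and finite: "(\<integral>\<^sup>+ y. Qmin A Q y \<partial>p x a \<mu>) < \<infinity>"
  shows "ennreal (Q x a) = ennreal (c x a \<mu>) + ennreal \<beta> * (\<integral>\<^sup>+ y. Qmin A Q y \<partial>p x a \<mu>)"
  unfolding fixed[symmetric] H1_def
  using V finite c \<beta>_nonneg measurable_cong_sets[OF sets_p[OF a] refl]
  by (intro ennreal_cost_plus_integral) auto

lemma H1_fixed_point_greedy_in_Psi:
  fixes Q :: "'x \<Rightarrow> 'a \<Rightarrow> real" and W :: "'x \<Rightarrow> real"
  assumes fixed: "\<And>x a. a \<in> A \<Longrightarrow> H1 c p \<beta> A Q \<mu> x a = Q x a"
    and Q_nonneg: "\<And>x a. a \<in> A \<Longrightarrow> 0 \<le> Q x a" and c_nonneg: "\<And>x a. a \<in> A \<Longrightarrow> 0 \<le> c x a \<mu>"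
    and V_meas: "Qmin A Q \<in> borel_measurable borel" and V_le: "\<And>x. Qmin A Q x \<le> K * W x"
    and W_meas: "W \<in> borel_measurable borel" and W_nonneg: "\<And>x. 0 \<le> W x" and K_nonneg: "0 \<le> K"
    and \<gamma>_nonneg: "0 \<le> \<gamma>" and contraction: "\<beta> * \<gamma> < 1"
    and drift: "\<And>x a. a \<in> A \<Longrightarrow> (\<integral>\<^sup>+ y. W y \<partial>p x a \<mu>) \<le> ennreal (\<gamma> * W x)"
    and f: "f \<in> borel_measurable borel" "\<And>x. f x \<in> A" "\<And>x b. b \<in> A \<Longrightarrow> Q x (f x) \<le> Q x b"
  shows "(\<lambda>x. return borel (f x)) \<in> Psi c p \<beta> A \<mu>"
proof -
  let ?V = "Qmin A Q"
  have bellman: "ennreal (Q x a) = ennreal (c x a \<mu>) + ennreal \<beta> * (\<integral>\<^sup>+ y. ?V y \<partial>p x a \<mu>)"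
    if a: "a \<in> A" for x a
  proof -
    have "W \<in> borel_measurable (p x a \<mu>)"
      using W_meas measurable_cong_sets[OF sets_p[OF a] refl] by blast
    then have "(\<integral>\<^sup>+ y. ?V y \<partial>p x a \<mu>) \<le> ennreal K * (\<integral>\<^sup>+ y. W y \<partial>p x a \<mu>)"
      by (rule nn_integral_le_weight[OF V_le K_nonneg])
    also have "\<dots> \<le> ennreal K * ennreal (\<gamma> * W x)"
      by (intro mult_left_mono drift a) simp
    also have "\<dots> < \<infinity>" by (simp add: ennreal_mult_less_top)
    finally show ?thesis
      using a c_nonneg[OF a] V_meas cINF_greatest[OF A_nonempty Q_nonneg]
      by (intro H1_fixed_point_bellman fixed) (auto simp: Qmin_def)
  qed
  show ?thesis
  proof (rule return_in_Psi[OF V_meas W_meas W_nonneg K_nonneg V_le \<gamma>_nonneg contraction drift _ f(1,2)])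
    show "ennreal (?V x) \<le> ennreal (c x a \<mu>) + ennreal \<beta> * (\<integral>\<^sup>+ y. ?V y \<partial>p x a \<mu>)"
      if "a \<in> A" for x a
      unfolding bellman[OF that, symmetric] by (intro ennreal_leI Qmin_le[where Q=Q, OF Q_nonneg that])
    show "ennreal (?V x) = ennreal (c x (f x) \<mu>) + ennreal \<beta> * (\<integral>\<^sup>+ y. ?V y \<partial>p x (f x) \<mu>)" for x
    proof -
      have "?V x = Q x (f x)"
        unfolding Qmin_def using f A_nonempty
        by (intro antisym cINF_greatest Qmin_le[where Q=Q and x=x, OF Q_nonneg f(2),
              unfolded Qmin_def]) auto
      then show ?thesis by (simp only: bellman[OF f(2)])
    qed
  qed
qed

end

theorem theorem2:
  fixes A :: "'a::euclidean_space set"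
    and p :: "'x::polish_space \<Rightarrow> 'a \<Rightarrow> 'x measure \<Rightarrow> 'x measure"
    and c :: "'x \<Rightarrow> 'a \<Rightarrow> 'x measure \<Rightarrow> real"
    and w :: "'x \<Rightarrow> 'a \<Rightarrow> real"
    and DF :: "'x \<Rightarrow> ('x \<Rightarrow> real) \<Rightarrow> 'x measure \<Rightarrow> 'a \<Rightarrow> 'a"
    and \<beta> L1 L2 K1 K2 M \<alpha> \<rho> KF :: real
    and Qs :: "'x \<Rightarrow> 'a \<Rightarrow> real"
    and \<mu>s :: "'x measure"
  defines "\<F> \<equiv> {v \<in> Lip (L2 / (1 - \<beta> * K2)) \<inter> Bnd w A (M / (1 - \<beta> * \<alpha>)). \<forall>x. 0 \<le> v x}"
  assumes A_compact: "compact A" and A_ne: "A \<noteq> {}"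
    and beta: "0 < \<beta>" "\<beta> < 1"
    and consts_nonneg: "0 \<le> L1" "0 \<le> L2" "0 \<le> K1" "0 \<le> K2" "0 \<le> M" "0 \<le> \<alpha>" "0 \<le> KF"
    \<comment> \<open>measurability of p and c\<close>
    and p_meas: "(\<lambda>(x, a, \<mu>). p x a \<mu>) \<in>
        borel \<Otimes>\<^sub>M restrict_space borel A \<Otimes>\<^sub>M prob_algebra borel \<rightarrow>\<^sub>M prob_algebra borel"
    and c_meas: "(\<lambda>(x, a, \<mu>). c x a \<mu>) \<in>
        borel_measurable (borel \<Otimes>\<^sub>M restrict_space borel A \<Otimes>\<^sub>M prob_algebra borel)"
    and c_nonneg: "\<And>x a \<mu>. a \<in> A \<Longrightarrow> \<mu> \<in> Prob \<Longrightarrow> 0 \<le> c x a \<mu>"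
    \<comment> \<open>weight function\<close>
    and w_cont: "continuous_on (UNIV \<times> A) (\<lambda>(x, a). w x a)"
    and w_ge1: "\<And>x a. a \<in> A \<Longrightarrow> 1 \<le> w x a"
    \<comment> \<open>Assumption 1 (a)\<close>
    and c_cont: "\<And>xs as \<mu>ss x a \<mu>. (\<forall>n. as n \<in> A \<and> \<mu>ss n \<in> Prob) \<Longrightarrow> a \<in> A \<Longrightarrow> \<mu> \<in> Prob \<Longrightarrow>
        xs \<longlonglongrightarrow> x \<Longrightarrow> as \<longlonglongrightarrow> a \<Longrightarrow> weak_conv \<mu>ss \<mu> \<Longrightarrow>
        (\<lambda>n. c (xs n) (as n) (\<mu>ss n)) \<longlonglongrightarrow> c x a \<mu>"
    and c_lip_mu: "\<And>x a \<mu> \<mu>'. a \<in> A \<Longrightarrow> \<mu> \<in> Prob \<Longrightarrow> \<mu>' \<in> Prob \<Longrightarrow>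
        ennreal \<bar>c x a \<mu> - c x a \<mu>'\<bar> \<le> ennreal (L1 * w x a) * W1 \<mu> \<mu>'"
    and c_lip_x: "\<And>x x' a \<mu>. a \<in> A \<Longrightarrow> \<mu> \<in> Prob \<Longrightarrow>
        \<bar>c x a \<mu> - c x' a \<mu>\<bar> \<le> L2 * dist x x'"
    \<comment> \<open>Assumption 1 (b)\<close>
    and p_cont: "\<And>xs as \<mu>ss x a \<mu>. (\<forall>n. as n \<in> A \<and> \<mu>ss n \<in> Prob) \<Longrightarrow> a \<in> A \<Longrightarrow> \<mu> \<in> Prob \<Longrightarrow>
        xs \<longlonglongrightarrow> x \<Longrightarrow> as \<longlonglongrightarrow> a \<Longrightarrow> weak_conv \<mu>ss \<mu> \<Longrightarrow>
        weak_conv (\<lambda>n. p (xs n) (as n) (\<mu>ss n)) (p x a \<mu>)"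
    and p_lip_a_mu: "\<And>x a a' \<mu> \<mu>'. a \<in> A \<Longrightarrow> a' \<in> A \<Longrightarrow> \<mu> \<in> Prob \<Longrightarrow> \<mu>' \<in> Prob \<Longrightarrow>
        W1 (p x a \<mu>) (p x a' \<mu>') \<le> ennreal K1 * (ennreal (norm (a - a')) + W1 \<mu> \<mu>')"
    and p_lip_x_a: "\<And>x x' a a' \<mu>. a \<in> A \<Longrightarrow> a' \<in> A \<Longrightarrow> \<mu> \<in> Prob \<Longrightarrow>
        W1 (p x a \<mu>) (p x' a' \<mu>) \<le> ennreal (K2 * (dist x x' + norm (a - a')))"
    \<comment> \<open>Assumption 1 (c)\<close>
    and A_convex: "convex A"
    \<comment> \<open>Assumption 1 (d)\<close>
    and c_bound: "\<And>x a \<mu>. a \<in> A \<Longrightarrow> \<mu> \<in> Prob \<Longrightarrow> c x a \<mu> \<le> M * w x a"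
    and drift: "\<And>x a \<mu>. a \<in> A \<Longrightarrow> \<mu> \<in> Prob \<Longrightarrow>
        (\<integral>\<^sup>+ y. ennreal (wmax w A y) \<partial>(p x a \<mu>)) \<le> ennreal (\<alpha> * w x a)"
    \<comment> \<open>Assumption 1 (e): DF is the gradient of a \<mapsto> F(x,v,mu,a) on A\<close>
    and rho_pos: "0 < \<rho>"
    and F_deriv: "\<And>x v \<mu> a. v \<in> \<F> \<Longrightarrow> \<mu> \<in> Prob \<Longrightarrow> a \<in> A \<Longrightarrow>
        ((\<lambda>b. Fop c p \<beta> x v \<mu> b) has_derivative (\<lambda>h. DF x v \<mu> a \<bullet> h)) (at a within A)"
    and F_strong_conv: "\<And>x v \<mu>. v \<in> \<F> \<Longrightarrow> \<mu> \<in> Prob \<Longrightarrow>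
        strongly_convex_on A \<rho> (\<lambda>b. Fop c p \<beta> x v \<mu> b)"
    and DF_lip: "\<And>x x' v v' \<mu> \<mu>' a. v \<in> \<F> \<Longrightarrow> v' \<in> \<F> \<Longrightarrow> \<mu> \<in> Prob \<Longrightarrow> \<mu>' \<in> Prob \<Longrightarrow> a \<in> A \<Longrightarrow>
        ennreal (norm (DF x v \<mu> a - DF x' v' \<mu>' a))
          \<le> ennreal KF * (ennreal (dist x x' + wmax_norm w A (\<lambda>y. v y - v' y)) + W1 \<mu> \<mu>')"
    \<comment> \<open>Assumption 2\<close>
    and assm2: "max (\<beta> * \<alpha> + KF / \<rho> * K1)
                    (L1 + \<beta> * (L2 / (1 - \<beta> * K2)) * K1 + (KF / \<rho> + 1) * K1 + K2 + KF / \<rho>) < 1"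
    \<comment> \<open>(Q*, mu*) is a fixed point of H in C x P(X)\<close>
    and Qs_C: "Qs \<in> Cset w A M \<beta> \<alpha> L2 K2"
    and \<mu>s_P: "\<mu>s \<in> Prob"
    and fix1: "\<And>x a. a \<in> A \<Longrightarrow> H1 c p \<beta> A Qs \<mu>s x a = Qs x a"
    and fix2: "H2 c p \<beta> A Qs \<mu>s = \<mu>s"
  shows "(\<forall>x. \<exists>!a. a \<in> A \<and> (\<forall>b\<in>A. Qs x a \<le> Qs x b))
       \<and> is_MFE c p \<beta> A
           (\<lambda>x. return borel (THE a. a \<in> A \<and> (\<forall>b\<in>A. Qs x a \<le> Qs x b))) \<mu>s"
proof -
  define V where "V = Qmin A Qs"
  define W where "W = wmax w A"
  define K where "K = M / (1 - \<beta> * \<alpha>)"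
  have "0 \<le> KF / \<rho> * K1" using consts_nonneg rho_pos by simp
  then have \<beta>\<alpha>: "\<beta> * \<alpha> < 1" using assm2 by linarith
  have V_F: "V \<in> \<F>"
    unfolding V_def \<F>_def by (rule Qmin_in_value_class[OF Qs_C w_cont w_ge1 A_compact A_ne])
  then have V_meas: "V \<in> borel_measurable borel" and V_le: "\<And>x. V x \<le> K * W x"
    unfolding \<F>_def Bnd_def K_def W_def by auto
  have K_nonneg: "0 \<le> K" unfolding K_def using \<beta>\<alpha> consts_nonneg by simp
  have Qs_nonneg: "a \<in> A \<Longrightarrow> 0 \<le> Qs x a" for x a using Qs_C by (auto simp: Cset_def)
  have w_le_W: "a \<in> A \<Longrightarrow> w x a \<le> W x" for x a
    unfolding W_def by (rule wmax_upper[OF w_cont A_compact])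
  have W_meas: "W \<in> borel_measurable borel"
    unfolding W_def by (rule borel_measurable_wmax[OF w_cont A_compact A_ne])
  have W_nonneg: "0 \<le> W x" for x
    using wmax_ge_1[OF w_cont w_ge1 A_compact A_ne, of x] unfolding W_def by simp
  have \<mu>s_prob: "\<mu>s \<in> space (prob_algebra borel)"
    using \<mu>s_P by (simp add: Prob_def space_prob_algebra)
  interpret frozen_mdp A p c \<beta> \<mu>s
    using A_compact A_convex A_ne p_meas c_meas \<mu>s_prob beta
    by unfold_locales (auto intro: compact_imp_closed)
  have drift_W: "(\<integral>\<^sup>+ y. W y \<partial>p x a \<mu>s) \<le> ennreal (\<alpha> * W x)" if "a \<in> A" for x a
    using drift[OF that \<mu>s_P] mult_left_mono[OF w_le_W[OF that] consts_nonneg(6)]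
    unfolding W_def by (meson ennreal_leI order_trans)
  have DF_lip_x: "norm (DF x V \<mu>s a - DF x' V \<mu>s a) \<le> KF * dist x x'" if "a \<in> A" for x x' a
    using DF_lip[OF V_F V_F \<mu>s_P \<mu>s_P that, of x x']
    by (simp add: W1_refl[OF \<mu>s_P] wmax_norm_def ennreal_mult'[symmetric] consts_nonneg)
  note argmin = H1_fixed_point_argmin[OF A_convex A_compact A_ne rho_pos consts_nonneg(7)
      fix1[of _ _] F_deriv[OF V_F \<mu>s_P, unfolded V_def] F_strong_conv[OF V_F \<mu>s_P, unfolded V_def]
      DF_lip_x[unfolded V_def]]
  define f where "f x = (THE a. a \<in> A \<and> (\<forall>b\<in>A. Qs x a \<le> Qs x b))" for x
  have f_meas: "f \<in> borel_measurable borel" unfolding f_def by (rule argmin(2))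
  have f: "f x \<in> A" "\<And>b. b \<in> A \<Longrightarrow> Qs x (f x) \<le> Qs x b" for x
    using theI'[OF argmin(1)[rule_format, of x]] unfolding f_def by blast+
  have "\<mu>s \<in> Lambda p (\<lambda>x. return borel (f x))"
    using H2_fixed_point_in_Lambda[OF fix2 \<mu>s_P] by (simp add: argmin(3) f_def)
  moreover have "(\<lambda>x. return borel (f x)) \<in> Psi c p \<beta> A \<mu>s"
    using fix1 Qs_nonneg c_nonneg[OF _ \<mu>s_P] V_meas V_le W_meas W_nonneg K_nonneg consts_nonneg(6)
      \<beta>\<alpha> drift_W f_meas f
    unfolding V_def by (rule H1_fixed_point_greedy_in_Psi)
  ultimately show ?thesis
    unfolding is_MFE_def f_def[abs_def] using argmin(1) by blast
qed

end
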